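(* For any odd prime $p$ and any non-negative integer $k$, \[ C^{(-k-1)}_{p-2}\equiv\begin{cases}0\pmod p & \text{if } k\not\equiv 0\pmod{p-1},\\ 1\pmod p & \text{if } k\equiv 0\pmod{p-1}.\end{cases} \]
   Context: For any integer $k$, let $\mathrm{Li}_k(t)=\sum_{n=1}^{\infty} t^n/n^k$. The poly-Bernoulli numbers of type $C$, $C^{(k)}_n$ ($n\ge0$), are defined by $\frac{\mathrm{Li}_k(1-e^{-t})}{e^{t}-1}=\sum_{n=0}^{\infty}C^{(k)}_n\frac{t^n}{n!}$. For negative upper index these are integers. *)

theory Defs
  imports "HOL-Computational_Algebra.Computational_Algebra" "HOL-Number_Theory.Number_Theory"
begin

definition Li_fps :: "int \<Rightarrow> rat fps" where
  "Li_fps k = Abs_fps (\<lambda>n. if n = 0 then 0 else (of_nat n) powi (- k))"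

definition polyBernC_gf :: "int \<Rightarrow> rat fps" where
  "polyBernC_gf k = (Li_fps k oo (1 - fps_exp (-1))) / (fps_exp 1 - 1)"

definition polyBernC :: "int \<Rightarrow> nat \<Rightarrow> rat" where
  "polyBernC k n = fact n * fps_nth (polyBernC_gf k) n"

end

theory Submission
  imports Defs
begin

text \<open>
  Since Li_{-k-1}(t) = sum_{i>=0} (i+1)^{k+1} t^{i+1} and e^t - 1 = e^t (1 - e^{-t}), the generating
  function is e^{-t} sum_i (i+1)^{k+1} (1 - e^{-t})^i. Expanding (1 - e^{-t})^i binomially gives
  C^{(-k-1)}_n = sum_{i<=n} (i+1)^{k+1} E(n,i) with the integers
  E(n,i) = sum_r binom(i,r) (-1)^r (-(r+1))^n.
  For odd n = p - 2, the identity (i+1) binom(i,r) = (r+1) binom(i+1,r+1) turns (i+1) E(n,i) into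
  -sum_r binom(i+1,r+1) (-1)^r (r+1)^{p-1}, which is -1 mod p by Fermat's little theorem and the
  alternating binomial sum. Hence C^{(-k-1)}_{p-2} = -sum_{l=1}^{p-1} l^k mod p, and writing l as
  powers of a primitive root turns this power sum into a geometric sum, which is -1 or 0 mod p
  according as p - 1 divides k or not.
\<close>

lemma fps_mult_compose_nth:
  fixes a b c :: "'a::comm_ring_1 fps"
  assumes b0: "b $ 0 = 0"
  shows "(c * (a oo b)) $ n = (\<Sum>i\<le>n. a $ i * (c * b ^ i) $ n)"
proof -
  have compose_nth: "(a oo b) $ m = (\<Sum>i\<le>n. a $ i * (b ^ i) $ m)" if "m \<le> n" for m
  proof -
    have "(b ^ i) $ m = 0" if "m < i" for i
      using startsby_zero_power_prefix[OF b0] that by blast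
    then show ?thesis
      unfolding fps_compose_nth atLeast0AtMost
      using \<open>m \<le> n\<close> by (intro sum.mono_neutral_left) auto
  qed
  have "(c * (a oo b)) $ n = (\<Sum>j\<le>n. c $ j * (\<Sum>i\<le>n. a $ i * (b ^ i) $ (n - j)))"
    unfolding fps_mult_nth atLeast0AtMost
    by (intro sum.cong refl arg_cong[where f = "(*) _"] compose_nth) simp
  also have "\<dots> = (\<Sum>i\<le>n. a $ i * (\<Sum>j\<le>n. c $ j * (b ^ i) $ (n - j)))"
    unfolding sum_distrib_left by (subst sum.swap) (simp add: mult_ac)
  finally show ?thesis
    by (simp add: fps_mult_nth atLeast0AtMost)
qed

lemma power_one_minus_fps_exp:
  fixes c :: "'a::field_char_0"
  shows "(1 - fps_exp c) ^ i =
    (\<Sum>r\<le>i. fps_const (of_nat (i choose r) * (-1) ^ r) * fps_exp (of_nat r * c))"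
proof -
  have "(1 - fps_exp c) ^ i = (- fps_exp c + 1) ^ i"
    by simp
  also have "\<dots> = (\<Sum>r\<le>i. of_nat (i choose r) * (- fps_exp c) ^ r)"
    by (subst binomial_ring) (simp add: atLeast0AtMost)
  also have "\<dots> = (\<Sum>r\<le>i. fps_const (of_nat (i choose r) * (-1) ^ r) * fps_exp (of_nat r * c))"
  proof (rule sum.cong [OF refl])
    fix r
    have "(- fps_exp c) ^ r = fps_const ((-1) ^ r) * fps_exp (of_nat r * c)"
      by (simp add: power_minus' fps_exp_power_mult flip: fps_const_neg fps_const_power)
    then show "of_nat (i choose r) * (- fps_exp c) ^ r =
        fps_const (of_nat (i choose r) * (-1) ^ r) * fps_exp (of_nat r * c)"
      by (simp add: mult.assoc flip: fps_of_nat fps_const_mult)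
  qed
  finally show ?thesis .
qed

definition exp_binomial_sum :: "nat \<Rightarrow> nat \<Rightarrow> int" where
  "exp_binomial_sum n i = (\<Sum>r\<le>i. int (i choose r) * (-1) ^ r * (- (int r + 1)) ^ n)"

lemma fps_exp_times_power_one_minus_fps_exp_nth:
  "(fps_exp (-1) * (1 - fps_exp (-1)) ^ i) $ n = (of_int (exp_binomial_sum n i) / fact n :: rat)"
proof -
  have "fps_exp (-1) * (1 - fps_exp (-1 :: rat)) ^ i =
      (\<Sum>r\<le>i. fps_const (of_nat (i choose r) * (-1) ^ r) * fps_exp (- (of_nat r + 1)))"
  proof -
    have "fps_exp (- of_nat r - 1) = fps_exp (-1) * fps_exp (- of_nat r :: rat)" for r
      by (simp add: fps_exp_add_mult [symmetric])
    then show ?thesis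
      unfolding power_one_minus_fps_exp sum_distrib_left
      by (intro sum.cong refl) (simp add: mult_ac)
  qed
  then show ?thesis
    by (simp add: exp_binomial_sum_def fps_sum_nth sum_divide_distrib)
qed

lemma Li_fps_eq_fps_X_times_shift: "Li_fps k = fps_X * fps_shift 1 (Li_fps k)"
  by (rule fps_ext) (simp add: Li_fps_def)

lemma polyBernC_gf_eq:
  "polyBernC_gf k = fps_exp (-1) * (fps_shift 1 (Li_fps k) oo (1 - fps_exp (-1)))"
proof -
  define X where "X = 1 - fps_exp (-1 :: rat)"
  define D where "D = fps_exp (1 :: rat) - 1"
  have X0: "X $ 0 = 0"
    by (simp add: X_def)
  have "Li_fps k oo X = X * (fps_shift 1 (Li_fps k) oo X)"
    by (subst Li_fps_eq_fps_X_times_shift)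
      (simp only: fps_compose_mult_distrib [OF X0] fps_X_fps_compose_startby0 [OF X0])
  moreover have "X = D * fps_exp (-1)"
    by (simp add: X_def D_def algebra_simps flip: fps_exp_add_mult)
  moreover have "D \<noteq> 0"
  proof
    assume "D = 0"
    then have "D $ 1 = 0"
      by simp
    then show False
      by (simp add: D_def)
  qed
  ultimately show ?thesis
    unfolding polyBernC_gf_def X_def [symmetric] D_def [symmetric]
    by (simp add: mult.assoc)
qed

lemma polyBernC_eq_sum:
  "polyBernC k n = (\<Sum>i\<le>n. of_nat (i + 1) powi (- k) * of_int (exp_binomial_sum n i))"
proof -
  have "polyBernC k n =
      fact n * (\<Sum>i\<le>n. fps_shift 1 (Li_fps k) $ i * (fps_exp (-1) * (1 - fps_exp (-1)) ^ i) $ n)"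
    unfolding polyBernC_def polyBernC_gf_eq by (simp add: fps_mult_compose_nth)
  then show ?thesis
    by (simp add: Li_fps_def fps_exp_times_power_one_minus_fps_exp_nth sum_distrib_left)
qed

lemma polyBernC_neg_eq_of_int:
  "polyBernC (- int k - 1) n = of_int (\<Sum>i\<le>n. (int i + 1) ^ (k + 1) * exp_binomial_sum n i)"
proof -
  have "of_nat (i + 1) powi (- (- int k - 1)) = (of_nat i + 1 :: rat) ^ (k + 1)" for i
    using power_int_of_nat [of "of_nat (i + 1) :: rat" "k + 1"] by (simp add: add.commute)
  then show ?thesis
    by (simp add: polyBernC_eq_sum)
qed

lemma geometric_sum_cong_0:
  fixes q x :: int
  assumes "prime q" and "[x ^ m = 1] (mod q)" and "\<not> [x = 1] (mod q)"
  shows "[(\<Sum>i<m. x ^ i) = 0] (mod q)"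
proof -
  have "q dvd (x - 1) * (\<Sum>i<m. x ^ i)"
    using assms(2) power_diff_1_eq [of x m] by (simp add: cong_iff_dvd_diff)
  moreover have "\<not> q dvd x - 1"
    using assms(3) by (simp add: cong_iff_dvd_diff)
  ultimately show ?thesis
    using assms(1) by (simp add: prime_dvd_mult_iff cong_0_iff)
qed

lemma sum_powers_cong_geometric_sum:
  fixes p g k :: nat
  assumes "prime p" and "residue_primroot p g"
  shows "[(\<Sum>l=1..<p. int l ^ k) = (\<Sum>i<p - 1. (int g ^ k) ^ i)] (mod int p)"
proof -
  have "{0<..<p} = {1..<p}"
    by auto
  then have "bij_betw (\<lambda>i. g ^ i mod p) {..<p - 1} {1..<p}"
    using residue_primroot_is_generator [OF prime_gt_1_nat assms(2)] assms(1)
    by (simp add: totient_prime totatives_prime)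
  then have "(\<Sum>l=1..<p. int l ^ k) = (\<Sum>i<p - 1. int (g ^ i mod p) ^ k)"
    by (simp add: sum.reindex_bij_betw [symmetric])
  also have "[\<dots> = (\<Sum>i<p - 1. (int g ^ k) ^ i)] (mod int p)"
  proof (rule cong_sum)
    fix i
    have "[int (g ^ i mod p) ^ k = (int g ^ i) ^ k] (mod int p)"
      by (intro cong_pow) (simp add: of_nat_mod cong_def)
    then show "[int (g ^ i mod p) ^ k = (int g ^ k) ^ i] (mod int p)"
      by (simp add: mult.commute flip: power_mult)
  qed
  finally show ?thesis .
qed

lemma sum_powers_mod_prime:
  fixes p k :: nat
  assumes p: "prime p"
  shows "[(\<Sum>l=1..<p. int l ^ k) = (if (p - 1) dvd k then -1 else 0)] (mod int p)"
proof -
  obtain g where g: "g \<in> totatives p" "ord p g = p - 1"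
    using residue_prime_has_primroot [OF p] by blast
  have "residue_primroot p g"
    using g p prime_gt_1_nat by (simp add: residue_primroot_def totient_prime totatives_def coprime_commute)
  note geometric = sum_powers_cong_geometric_sum [OF p this, of k]
  have ord_dvd_iff: "[int g ^ k = 1] (mod int p) \<longleftrightarrow> (p - 1) dvd k"
    using ord_divides [of g k p] g(2) cong_int_iff [of "g ^ k" 1 p] by simp
  show ?thesis
  proof (cases "(p - 1) dvd k")
    case True
    then have "[(\<Sum>i<p - 1. (int g ^ k) ^ i) = (\<Sum>i<p - 1. 1)] (mod int p)"
      using ord_dvd_iff by (intro cong_sum) (metis cong_pow power_one)
    moreover have "[(\<Sum>i<p - 1. 1 :: int) = -1] (mod int p)"
      using prime_gt_1_nat [OF p] by (simp add: cong_iff_dvd_diff of_nat_diff)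
    ultimately show ?thesis
      using True geometric by (auto intro: cong_trans)
  next
    case False
    have "[(int g ^ k) ^ (p - 1) = 1] (mod int p)"
      using ord_divides [of g "(p - 1) * k" p] g(2) cong_int_iff [of "g ^ ((p - 1) * k)" 1 p]
      by (simp add: power_mult mult.commute)
    then have "[(\<Sum>i<p - 1. (int g ^ k) ^ i) = 0] (mod int p)"
      using False ord_dvd_iff p by (intro geometric_sum_cong_0) auto
    then show ?thesis
      using False geometric by (auto intro: cong_trans)
  qed
qed

lemma sum_alternating_Suc_choose_Suc: "(\<Sum>r\<le>i. int (Suc i choose Suc r) * (-1) ^ r) = 1"
proof -
  have "(\<Sum>s\<le>Suc i. (-1) ^ s * int (Suc i choose s)) = 0"
    by (rule choose_alternating_sum) simp
  then have "1 - (\<Sum>r\<le>i. (-1) ^ r * int (Suc i choose Suc r)) = 0"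
    by (simp only: sum.atMost_Suc_shift) (simp add: sum_negf)
  then show ?thesis
    by (simp add: mult.commute)
qed

lemma Suc_times_exp_binomial_sum_odd:
  assumes "odd n"
  shows "(int i + 1) * exp_binomial_sum n i =
    - (\<Sum>r\<le>i. int (Suc i choose Suc r) * (-1) ^ r * (int r + 1) ^ Suc n)"
proof -
  have "(int i + 1) * (int (i choose r) * (-1) ^ r * (- (int r + 1)) ^ n) =
      - (int (Suc i choose Suc r) * (-1) ^ r * (int r + 1) ^ Suc n)" for r
  proof -
    have "(int i + 1) * int (i choose r) = int (Suc i choose Suc r) * (int r + 1)"
      using arg_cong [OF Suc_times_binomial_eq [of i r], of int]
      by (simp only: of_nat_mult of_nat_Suc add.commute)
    then have "(int i + 1) * (int (i choose r) * (-1) ^ r * (- (int r + 1)) ^ n) =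
        - (int (Suc i choose Suc r) * (int r + 1) * (-1) ^ r * (int r + 1) ^ n)"
      by (simp only: power_minus_odd [OF assms] mult_minus_right mult.assoc [symmetric])
    then show ?thesis
      by (simp add: mult_ac del: binomial_Suc_Suc)
  qed
  then show ?thesis
    unfolding exp_binomial_sum_def sum_distrib_left by (simp add: sum_negf)
qed

lemma Suc_times_exp_binomial_sum_cong:
  fixes p i :: nat
  assumes p: "prime p" "odd p" and i: "i \<le> p - 2"
  shows "[(int i + 1) * exp_binomial_sum (p - 2) i = -1] (mod int p)"
proof -
  have p3: "p \<ge> 3"
    using p prime_ge_2_nat [OF p(1)] by (cases "p = 2") auto
  then have odd_p_minus_2: "odd (p - 2)" and Suc_p_minus_2: "Suc (p - 2) = p - 1"
    using p(2) by presburger+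
  have "[(\<Sum>r\<le>i. int (Suc i choose Suc r) * (-1) ^ r * (int r + 1) ^ (p - 1)) =
      (\<Sum>r\<le>i. int (Suc i choose Suc r) * (-1) ^ r * 1)] (mod int p)"
  proof (intro cong_sum cong_mult cong_refl)
    fix r assume "r \<in> {..i}"
    then have "\<not> p dvd Suc r"
      using i p3 by (auto dest: dvd_imp_le)
    then have "[Suc r ^ (p - 1) = 1] (mod p)"
      using fermat_theorem [OF p(1)] by blast
    then show "[(int r + 1) ^ (p - 1) = 1] (mod int p)"
      using cong_int_iff [of "Suc r ^ (p - 1)" 1 p] by (simp add: add.commute)
  qed
  then have "[- (\<Sum>r\<le>i. int (Suc i choose Suc r) * (-1) ^ r * (int r + 1) ^ (p - 1)) = -1] (mod int p)"
    by (simp only: mult_1_right sum_alternating_Suc_choose_Suc cong_minus_minus_iff)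
  then show ?thesis
    by (simp only: Suc_times_exp_binomial_sum_odd [OF odd_p_minus_2] Suc_p_minus_2)
qed

theorem theorem3p2:
  fixes p k :: nat
  assumes "prime p" and "odd p"
  shows "\<exists>c::int. polyBernC (- int k - 1) (p - 2) = of_int c \<and>
           [c = (if [k = 0] (mod (p - 1)) then 1 else 0)] (mod int p)"
proof -
  have "p \<ge> 2"
    using assms(1) prime_ge_2_nat by blast
  have "(\<Sum>i\<le>p - 2. (int i + 1) ^ (k + 1) * exp_binomial_sum (p - 2) i) =
      (\<Sum>i\<le>p - 2. (int i + 1) ^ k * ((int i + 1) * exp_binomial_sum (p - 2) i))"
    by (simp add: mult_ac)
  also have "[\<dots> = (\<Sum>i\<le>p - 2. (int i + 1) ^ k * -1)] (mod int p)"
    using Suc_times_exp_binomial_sum_cong [OF assms] by (intro cong_sum cong_mult cong_refl) auto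
  also have "(\<Sum>i\<le>p - 2. (int i + 1) ^ k * -1) = - (\<Sum>l=1..<p. int l ^ k)"
  proof -
    have "{..p - 2} = {0..<p - 1}"
      using \<open>p \<ge> 2\<close> by auto
    then show ?thesis
      using sum.shift_bounds_Suc_ivl [of "\<lambda>l. int l ^ k" 0 "p - 1"] \<open>p \<ge> 2\<close>
      by (simp add: sum_negf add.commute)
  qed
  also have "[\<dots> = - (if (p - 1) dvd k then -1 else 0)] (mod int p)"
    using sum_powers_mod_prime [OF assms(1)] by (simp only: cong_minus_minus_iff)
  also have "- (if (p - 1) dvd k then -1 else 0) = (if [k = 0] (mod (p - 1)) then 1 else (0::int))"
    by (simp add: cong_0_iff)
  finally show ?thesis
    using polyBernC_neg_eq_of_int by blast
qed

end
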